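(* Let $G$ be a connected graph with minimum degree at least three. Suppose $G$ contains two distinct vertices $v,v'$ joined by exactly two parallel edges $a,b$, such that each of $v,v'$ has degree exactly $3$, its third edge going to a vertex outside $\{v,v'\}$. (Such $v$ is called a $\beta$-vertex.) If $G-v$ is connected, then $\gamma_M(G-v)=\gamma_M(G)-1$; that is, $v$ is a 1-critical-vertex of $G$.
   Context: Graphs may have multiple edges. $\gamma_M(H)$ is the maximum genus of a connected graph $H$ (largest $k$ such that $H$ embeds cellularly in the orientable surface of genus $k$). A vertex $v$ of $G$ is a 1-critical-vertex if $G-v$ is connected and $\gamma_M(G-v)=\gamma_M(G)-1$. *)

theory Defs
  imports Main
begin

text \<open>A finite multigraph (loops and parallel edges allowed): vertex set V, edge set E,
  and an endpoint map ends; edge e joins fst (ends e) and snd (ends e).\<close>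

definition multigraph :: "'v set \<Rightarrow> 'e set \<Rightarrow> ('e \<Rightarrow> 'v \<times> 'v) \<Rightarrow> bool" where
  "multigraph V E ends \<longleftrightarrow> finite V \<and> finite E \<and>
     (\<forall>e\<in>E. fst (ends e) \<in> V \<and> snd (ends e) \<in> V)"

definition incident :: "('e \<Rightarrow> 'v \<times> 'v) \<Rightarrow> 'e \<Rightarrow> 'v \<Rightarrow> bool" where
  "incident ends e v \<longleftrightarrow> fst (ends e) = v \<or> snd (ends e) = v"

text \<open>Degree: a loop counts twice.\<close>
definition degree :: "'e set \<Rightarrow> ('e \<Rightarrow> 'v \<times> 'v) \<Rightarrow> 'v \<Rightarrow> nat" where
  "degree E ends v = card {e\<in>E. fst (ends e) = v} + card {e\<in>E. snd (ends e) = v}"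

definition adjacent :: "'e set \<Rightarrow> ('e \<Rightarrow> 'v \<times> 'v) \<Rightarrow> 'v \<Rightarrow> 'v \<Rightarrow> bool" where
  "adjacent E ends x y \<longleftrightarrow> (\<exists>e\<in>E. ends e = (x, y) \<or> ends e = (y, x))"

definition connected_graph :: "'v set \<Rightarrow> 'e set \<Rightarrow> ('e \<Rightarrow> 'v \<times> 'v) \<Rightarrow> bool" where
  "connected_graph V E ends \<longleftrightarrow> V \<noteq> {} \<and>
     (\<forall>x\<in>V. \<forall>y\<in>V. (x, y) \<in> {(a, b). adjacent E ends a b}\<^sup>*)"

definition del_vertex_V :: "'v set \<Rightarrow> 'v \<Rightarrow> 'v set" where
  "del_vertex_V V v = V - {v}"

definition del_vertex_E :: "'e set \<Rightarrow> ('e \<Rightarrow> 'v \<times> 'v) \<Rightarrow> 'v \<Rightarrow> 'e set" where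
  "del_vertex_E E ends v = {e\<in>E. \<not> incident ends e v}"

text \<open>Combinatorial maps (Heffter--Edmonds).  Darts are pairs (e, b); the dart (e, True)
  starts at fst (ends e), the dart (e, False) at snd (ends e).\<close>

definition darts :: "'e set \<Rightarrow> ('e \<times> bool) set" where
  "darts E = E \<times> UNIV"

definition dart_tail :: "('e \<Rightarrow> 'v \<times> 'v) \<Rightarrow> 'e \<times> bool \<Rightarrow> 'v" where
  "dart_tail ends d = (if snd d then fst (ends (fst d)) else snd (ends (fst d)))"

definition dart_rev :: "'e \<times> bool \<Rightarrow> 'e \<times> bool" where
  "dart_rev d = (fst d, \<not> snd d)"

definition rotation_system ::
  "'v set \<Rightarrow> 'e set \<Rightarrow> ('e \<Rightarrow> 'v \<times> 'v) \<Rightarrow> ('e \<times> bool \<Rightarrow> 'e \<times> bool) \<Rightarrow> bool" where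
  "rotation_system V E ends \<sigma> \<longleftrightarrow>
     bij_betw \<sigma> (darts E) (darts E) \<and>
     (\<forall>d. d \<notin> darts E \<longrightarrow> \<sigma> d = d) \<and>
     (\<forall>d\<in>darts E. dart_tail ends (\<sigma> d) = dart_tail ends d) \<and>
     (\<forall>d\<in>darts E. \<forall>d'\<in>darts E. dart_tail ends d = dart_tail ends d' \<longrightarrow>
        (\<exists>n. (\<sigma> ^^ n) d = d'))"

definition orbit_of :: "('a \<Rightarrow> 'a) \<Rightarrow> 'a \<Rightarrow> 'a set" where
  "orbit_of f x = {(f ^^ n) x | n. True}"

text \<open>Number of faces of the embedding given by a rotation system: the orbits of
  the face-tracing permutation sigma o rev (a graph without edges has one face).\<close>
definition num_faces :: "'e set \<Rightarrow> ('e \<times> bool \<Rightarrow> 'e \<times> bool) \<Rightarrow> nat" where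
  "num_faces E \<sigma> = (if E = {} then 1
     else card (orbit_of (\<sigma> \<circ> dart_rev) ` darts E))"

text \<open>Genus of the orientable surface determined by the rotation system (Euler's formula
  V - E + F = 2 - 2g).\<close>
definition embedding_genus ::
  "'v set \<Rightarrow> 'e set \<Rightarrow> ('e \<times> bool \<Rightarrow> 'e \<times> bool) \<Rightarrow> int" where
  "embedding_genus V E \<sigma> =
     (2 - int (card V) + int (card E) - int (num_faces E \<sigma>)) div 2"

definition max_genus :: "'v set \<Rightarrow> 'e set \<Rightarrow> ('e \<Rightarrow> 'v \<times> 'v) \<Rightarrow> int" where
  "max_genus V E ends =
     Max {embedding_genus V E \<sigma> | \<sigma>. rotation_system V E ends \<sigma>}"

end

theory Submission
  imports Defs "HOL-Combinatorics.Transposition"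
begin

text \<open>
  The genus of the embedding given by a rotation system is determined by its number of faces,
  the cycles of \<sigma> \<circ> dart_rev. Deleting v removes one vertex and the three edges a, b, c, so it
  suffices that every rotation system of G restricts to one of G - v with at most as many faces,
  and that every rotation system of G - v extends to one of G with exactly as many.
  Restricting cuts the dart of c at w out of the rotation at w and leaves the dart of d as the
  only dart at v'. Face tracing then differs only at two darts of G - v, where in G it makes
  detours through the six darts of a, b and c. If the cyclic orders at v and v' are parallel,
  each detour returns to where it left and the faces correspond exactly. Otherwise the two
  detours cross, which costs at most one face (composing with a transposition), while a and b
  bound an extra face of length two. Extending with parallel orders gives equality.
  The degree bound is needed only to keep an edge at w in G - v.
\<close>

section \<open>Orbits of a bijection of a finite set\<close>

lemma orbit_of_iff: "y \<in> orbit_of f x \<longleftrightarrow> (\<exists>n. (f ^^ n) x = y)"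
  unfolding orbit_of_def by auto

lemma self_in_orbit_of: "x \<in> orbit_of f x"
  unfolding orbit_of_iff by (metis funpow_0)

lemma orbit_of_step: "y \<in> orbit_of f x \<Longrightarrow> f y \<in> orbit_of f x"
  unfolding orbit_of_iff by (metis comp_apply funpow.simps(2))

lemma orbit_of_least:
  assumes "x \<in> S" "\<And>y. y \<in> S \<Longrightarrow> f y \<in> S" shows "orbit_of f x \<subseteq> S"
proof
  fix y assume "y \<in> orbit_of f x"
  then obtain n where "y = (f ^^ n) x" by (auto simp: orbit_of_iff)
  moreover have "(f ^^ n) x \<in> S" for n by (induction n) (auto simp: assms)
  ultimately show "y \<in> S" by simp
qed

lemma orbit_of_subset_carrier: "x \<in> S \<Longrightarrow> bij_betw f S S \<Longrightarrow> orbit_of f x \<subseteq> S"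
  by (rule orbit_of_least) (auto simp: bij_betw_def)

lemma orbit_of_subset: "y \<in> orbit_of f x \<Longrightarrow> orbit_of f y \<subseteq> orbit_of f x"
  by (rule orbit_of_least) (auto intro: orbit_of_step)

lemma orbit_of_fixpoint: "f x = x \<Longrightarrow> orbit_of f x = {x}"
  using orbit_of_least[of x "{x}" f] self_in_orbit_of[of x f] by auto

lemma orbit_of_cong:
  assumes "x \<in> S" "\<And>y. y \<in> S \<Longrightarrow> g y \<in> S" "\<And>y. y \<in> S \<Longrightarrow> f y = g y"
  shows "orbit_of f x = orbit_of g x"
proof -
  have "(f ^^ n) x = (g ^^ n) x \<and> (g ^^ n) x \<in> S" for n by (induction n) (auto simp: assms)
  then show ?thesis unfolding orbit_of_def by simp
qed

lemma orbit_of_cong_on_orbit: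
  "(\<And>y. y \<in> orbit_of f x \<Longrightarrow> g y = f y) \<Longrightarrow> orbit_of g x = orbit_of f x"
  by (rule orbit_of_cong[of x "orbit_of f x"]) (auto simp: self_in_orbit_of orbit_of_step)

lemma orbits_cong:
  assumes "\<And>y. y \<in> S \<Longrightarrow> g y \<in> S" "\<And>y. y \<in> S \<Longrightarrow> f y = g y"
  shows "orbit_of f ` S = orbit_of g ` S"
  using orbit_of_cong[of _ S g f] assms by (simp cong: image_cong)

lemma orbit_of_sym:
  assumes fin: "finite S" and bij: "bij_betw f S S" and x: "x \<in> S"
    and y: "y \<in> orbit_of f x"
  shows "x \<in> orbit_of f y"
proof -
  have inj: "inj_on f S" and maps: "\<And>y. y \<in> S \<Longrightarrow> f y \<in> S"
    using bij by (auto simp: bij_betw_def)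
  have iter_in: "(f ^^ n) x \<in> S" for n by (induction n) (auto simp: x maps)
  have "\<not> inj (\<lambda>n. (f ^^ n) x)"
  proof
    assume "inj (\<lambda>n. (f ^^ n) x)"
    moreover have "finite (range (\<lambda>n. (f ^^ n) x))"
      using iter_in by (auto intro: finite_subset[OF _ fin])
    ultimately show False using finite_imageD by fastforce
  qed
  then obtain i j where "i < j" "(f ^^ i) x = (f ^^ j) x"
    unfolding inj_def by (metis linorder_neqE_nat)
  then obtain m where m: "0 < m" "(f ^^ i) x = (f ^^ (i + m)) x"
    by (metis less_imp_add_positive zero_less_iff_neq_zero)
  have "(f ^^ (k + m)) x = (f ^^ k) x \<Longrightarrow> (f ^^ m) x = x" for k
  proof (induction k)
    case (Suc k)
    then have "f ((f ^^ (k + m)) x) = f ((f ^^ k) x)" by simp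
    then show ?case using Suc.IH inj iter_in by (simp add: inj_on_def)
  qed simp
  then have period: "(f ^^ m) x = x" using m(2) by (metis add.commute)
  have periodic: "(f ^^ (k * m)) x = x" for k
    by (induction k) (simp_all add: funpow_add period)
  obtain n where n: "y = (f ^^ n) x" using y by (auto simp: orbit_of_iff)
  have "(f ^^ (n * m - n)) y = (f ^^ (n * m)) x"
    using m(1) by (simp add: n funpow_add[symmetric, THEN fun_cong, simplified])
  then show ?thesis unfolding orbit_of_iff using periodic by metis
qed

lemma orbit_of_eq:
  assumes "finite S" "bij_betw f S S" "x \<in> S" "y \<in> orbit_of f x"
  shows "orbit_of f y = orbit_of f x"
  using orbit_of_subset[OF assms(4)] orbit_of_subset[OF orbit_of_sym[OF assms]] by blast

lemma three_cycle_cases: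
  assumes inj: "inj_on f {x1, x2, x3}" and orbit: "orbit_of f x1 = {x1, x2, x3}"
    and distinct: "distinct [x1, x2, x3]"
  shows "(f x1 = x2 \<and> f x2 = x3 \<and> f x3 = x1) \<or> (f x1 = x3 \<and> f x3 = x2 \<and> f x2 = x1)"
proof -
  have maps: "f y \<in> {x1, x2, x3}" if "y \<in> {x1, x2, x3}" for y
    using orbit_of_step[of y f x1] that orbit by simp
  have not_closed: False if "x1 \<in> A" "y \<in> {x1, x2, x3}" "y \<notin> A" "\<And>y. y \<in> A \<Longrightarrow> f y \<in> A"
    for A y
    using orbit_of_least[of x1 A f] that orbit by blast
  have inj_eq: "f y = f y' \<longleftrightarrow> y = y'" if "y \<in> {x1, x2, x3}" "y' \<in> {x1, x2, x3}" for y y'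
    using inj that by (auto simp: inj_on_def)
  have "f x1 \<noteq> x1" using not_closed[of "{x1}" x2] distinct by auto
  then consider "f x1 = x2" | "f x1 = x3" using maps[of x1] by auto
  then show ?thesis
  proof cases
    case 1
    have "f x2 \<noteq> x1" using not_closed[of "{x1, x2}" x3] 1 distinct by auto
    then have "f x2 = x3" using maps[of x2] inj_eq[of x1 x2] 1 distinct by auto
    then have "f x3 = x1" using maps[of x3] inj_eq[of x1 x3] inj_eq[of x2 x3] 1 distinct by auto
    with 1 \<open>f x2 = x3\<close> show ?thesis by simp
  next
    case 2
    have "f x3 \<noteq> x1" using not_closed[of "{x1, x3}" x2] 2 distinct by auto
    then have "f x3 = x2" using maps[of x3] inj_eq[of x1 x3] 2 distinct by auto
    then have "f x2 = x1" using maps[of x2] inj_eq[of x1 x2] inj_eq[of x3 x2] 2 distinct by auto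
    with 2 \<open>f x3 = x2\<close> show ?thesis by simp
  qed
qed

section \<open>Splicing new points into cycles\<close>

definition insert_after :: "'a \<Rightarrow> 'a \<Rightarrow> ('a \<Rightarrow> 'a) \<Rightarrow> 'a \<Rightarrow> 'a" where
  "insert_after z r f = f(z := r, r := f z)"

lemma insert_after_apply:
  "z \<noteq> r \<Longrightarrow> insert_after z r f z = r" "insert_after z r f r = f z"
  "u \<noteq> z \<Longrightarrow> u \<noteq> r \<Longrightarrow> insert_after z r f u = f u"
  by (simp_all add: insert_after_def)

lemma insert_after_eq_comp_transpose:
  "z \<noteq> r \<Longrightarrow> insert_after z r f = f(r := r) \<circ> transpose z r"
  by (auto simp: insert_after_def fun_eq_iff transpose_def)

lemma bij_betw_add_fixpoint_iff:
  assumes "r \<notin> S"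
  shows "bij_betw (f(r := r)) (insert r S) (insert r S) \<longleftrightarrow> bij_betw f S S"
proof -
  have "bij_betw (f(r := r)) S S \<longleftrightarrow> bij_betw f S S"
    using assms by (intro bij_betw_cong) auto
  moreover have "bij_betw (f(r := r)) (insert r S) (insert r S) \<longleftrightarrow> bij_betw (f(r := r)) S S"
    using notIn_Un_bij_betw3[of r S "f(r := r)" S] assms by simp
  ultimately show ?thesis by simp
qed

lemma bij_betw_insert_after_iff:
  assumes "z \<in> S" "r \<notin> S"
  shows "bij_betw (insert_after z r f) (insert r S) (insert r S) \<longleftrightarrow> bij_betw f S S"
proof -
  have "bij_betw (transpose z r) (insert r S) (insert r S)" using assms by simp
  then have "bij_betw (f(r := r) \<circ> transpose z r) (insert r S) (insert r S)
      \<longleftrightarrow> bij_betw (f(r := r)) (insert r S) (insert r S)"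
    by (rule bij_betw_comp_iff[symmetric])
  moreover have "z \<noteq> r" using assms by auto
  ultimately show ?thesis
    by (simp add: insert_after_eq_comp_transpose bij_betw_add_fixpoint_iff[OF assms(2)])
qed

lemma orbit_of_add_fixpoint:
  assumes "bij_betw f S S" "r \<notin> S" "u \<in> insert r S"
  shows "orbit_of (f(r := r)) u = (if u = r then {r} else orbit_of f u)"
proof (cases "u = r")
  case True then show ?thesis by (simp add: orbit_of_fixpoint)
next
  case False
  then have "orbit_of (f(r := r)) u = orbit_of f u"
    using assms by (intro orbit_of_cong[of u S]) (auto simp: bij_betw_def)
  then show ?thesis using False by simp
qed

lemma orbit_of_insert_after_self:
  assumes bij: "bij_betw f S S" and z: "z \<in> S" and r: "r \<notin> S"
  shows "orbit_of (insert_after z r f) z = insert r (orbit_of f z)"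
proof
  define g where "g = insert_after z r f"
  have maps: "\<And>y. y \<in> S \<Longrightarrow> f y \<in> S" using bij by (auto simp: bij_betw_def)
  have gz: "g z = r" and gr: "g r = f z" and gy: "\<And>y. y \<noteq> z \<Longrightarrow> y \<noteq> r \<Longrightarrow> g y = f y"
    using z r by (auto simp: g_def insert_after_def)
  show "orbit_of g z \<subseteq> insert r (orbit_of f z)"
  proof (rule orbit_of_least)
    fix y assume y: "y \<in> insert r (orbit_of f z)"
    consider "y = r" | "y = z" | "y \<in> orbit_of f z" "y \<noteq> z" "y \<noteq> r" using y by blast
    then show "g y \<in> insert r (orbit_of f z)"
      by cases (use gr gz gy orbit_of_step[of _ f z] self_in_orbit_of[of z f] in simp_all)
  qed (simp add: self_in_orbit_of)
  have r_in: "r \<in> orbit_of g z" using orbit_of_step[OF self_in_orbit_of, of g z] gz by simp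
  have "orbit_of f z \<subseteq> orbit_of g z \<inter> S"
  proof (rule orbit_of_least)
    fix y assume y: "y \<in> orbit_of g z \<inter> S"
    show "f y \<in> orbit_of g z \<inter> S"
    proof (cases "y = z")
      case True then show ?thesis using orbit_of_step[OF r_in] gr maps z by simp
    next
      case False
      have "y \<noteq> r" using y r by auto
      then show ?thesis using False orbit_of_step[of y g z] gy[of y] y maps by auto
    qed
  qed (use z self_in_orbit_of in auto)
  then show "insert r (orbit_of f z) \<subseteq> orbit_of g z" using r_in by blast
qed

lemma orbit_of_insert_after:
  assumes fin: "finite S" and bij: "bij_betw f S S" and z: "z \<in> S" and r: "r \<notin> S"
    and u: "u \<in> insert r S"
  shows "orbit_of (insert_after z r f) u =
    (if u \<in> insert r (orbit_of f z) then insert r (orbit_of f z) else orbit_of f u)"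
proof (cases "u \<in> insert r (orbit_of f z)")
  case True
  note orbit_z = orbit_of_insert_after_self[OF bij z r]
  then have "orbit_of (insert_after z r f) u = orbit_of (insert_after z r f) z"
    using True orbit_of_eq[of "insert r S" "insert_after z r f" z u] fin bij z r
    by (simp add: bij_betw_insert_after_iff)
  then show ?thesis using True orbit_z by simp
next
  case False
  then have uS: "u \<in> S" and "u \<notin> orbit_of f z" using u by auto
  then have "z \<notin> orbit_of f u" using orbit_of_sym[OF fin bij uS] by blast
  have "orbit_of (insert_after z r f) u = orbit_of f u"
  proof (rule orbit_of_cong_on_orbit)
    fix y assume "y \<in> orbit_of f u"
    then have "y \<noteq> z" "y \<noteq> r"
      using \<open>z \<notin> orbit_of f u\<close> orbit_of_subset_carrier[OF uS bij] r by auto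
    then show "insert_after z r f y = f y" by (simp add: insert_after_apply)
  qed
  then show ?thesis using False by simp
qed

lemma card_orbits_add_fixpoint:
  assumes "finite S" "bij_betw f S S" "r \<notin> S"
  shows "card (orbit_of (f(r := r)) ` insert r S) = card (orbit_of f ` S) + 1"
proof -
  have "orbit_of (f(r := r)) ` S = orbit_of f ` S"
    using orbit_of_add_fixpoint[OF assms(2,3)] assms(3) by (intro image_cong) auto
  then have "orbit_of (f(r := r)) ` insert r S = insert {r} (orbit_of f ` S)"
    by (simp add: orbit_of_fixpoint)
  moreover have "{r} \<notin> orbit_of f ` S"
    using orbit_of_subset_carrier[OF _ assms(2)] assms(3) by auto
  ultimately show ?thesis using assms(1) by simp
qed

lemma card_orbits_insert_after:
  assumes fin: "finite S" and bij: "bij_betw f S S" and z: "z \<in> S" and r: "r \<notin> S"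
  shows "card (orbit_of (insert_after z r f) ` insert r S) = card (orbit_of f ` S)"
proof -
  define h where "h X = (if z \<in> X then insert r X else X)" for X
  have orbit_u: "orbit_of (insert_after z r f) u = h (orbit_of f u)" if "u \<in> S" for u
  proof (cases "u \<in> orbit_of f z")
    case True
    then show ?thesis using orbit_of_insert_after[OF fin bij z r] orbit_of_eq[OF fin bij z True] that
      by (simp add: h_def self_in_orbit_of)
  next
    case False
    then have "z \<notin> orbit_of f u" using orbit_of_sym[OF fin bij that] by blast
    then show ?thesis using orbit_of_insert_after[OF fin bij z r] False that r by (auto simp: h_def)
  qed
  have orbit_r: "orbit_of (insert_after z r f) r = h (orbit_of f z)"
    using orbit_of_insert_after[OF fin bij z r] by (simp add: h_def self_in_orbit_of)
  have "orbit_of (insert_after z r f) ` S = h ` orbit_of f ` S"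
    unfolding image_image using orbit_u by (rule image_cong[OF refl])
  moreover have "h (orbit_of f z) \<in> h ` orbit_of f ` S" using z by blast
  ultimately have "orbit_of (insert_after z r f) ` insert r S = h ` orbit_of f ` S"
    by (simp add: orbit_r insert_absorb)
  moreover have "inj_on h (orbit_of f ` S)"
  proof (rule inj_onI)
    have h_inv: "h X - {r} = X" if "X \<in> orbit_of f ` S" for X
    proof -
      from that obtain u where "u \<in> S" "X = orbit_of f u" by blast
      then have "r \<notin> X" using orbit_of_subset_carrier[OF _ bij] r by blast
      then show ?thesis by (simp add: h_def)
    qed
    fix X Y assume "X \<in> orbit_of f ` S" "Y \<in> orbit_of f ` S" "h X = h Y"
    then show "X = Y" using h_inv by metis
  qed
  ultimately show ?thesis by (simp add: card_image)
qed

definition fibre :: "'a set \<Rightarrow> ('a \<Rightarrow> 'b) \<Rightarrow> 'a \<Rightarrow> 'a set" where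
  "fibre S k u = {u'\<in>S. k u' = k u}"

definition cyclic_on_fibres :: "('a \<Rightarrow> 'a) \<Rightarrow> 'a set \<Rightarrow> ('a \<Rightarrow> 'b) \<Rightarrow> bool" where
  "cyclic_on_fibres f S k \<longleftrightarrow> bij_betw f S S \<and> (\<forall>u\<in>S. orbit_of f u = fibre S k u)"

lemma cyclic_on_fibres_bij: "cyclic_on_fibres f S k \<Longrightarrow> bij_betw f S S"
  by (simp add: cyclic_on_fibres_def)

lemma cyclic_on_fibres_cong:
  "(\<And>u. u \<in> S \<Longrightarrow> f u = g u) \<Longrightarrow> cyclic_on_fibres f S k \<longleftrightarrow> cyclic_on_fibres g S k"
proof -
  assume eq: "\<And>u. u \<in> S \<Longrightarrow> f u = g u"
  show ?thesis
  proof (cases "bij_betw g S S")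
    case True
    then have "orbit_of f u = orbit_of g u" if "u \<in> S" for u
      using that eq by (intro orbit_of_cong[of u S]) (auto simp: bij_betw_def)
    then show ?thesis using True eq by (simp add: cyclic_on_fibres_def bij_betw_cong[of S f g])
  next
    case False
    then show ?thesis using eq by (simp add: cyclic_on_fibres_def bij_betw_cong[of S f g])
  qed
qed

lemma cyclic_on_fibres_add_fixpoint_iff:
  assumes r: "r \<notin> S" and new: "\<And>u. u \<in> S \<Longrightarrow> k u \<noteq> k r"
  shows "cyclic_on_fibres (f(r := r)) (insert r S) k \<longleftrightarrow> cyclic_on_fibres f S k"
proof (cases "bij_betw f S S")
  case True
  then have "orbit_of (f(r := r)) u = fibre (insert r S) k u \<longleftrightarrow> orbit_of f u = fibre S k u"
    if "u \<in> S" for u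
    using orbit_of_add_fixpoint[OF True r] that new[OF that] r by (auto simp: fibre_def)
  moreover have "orbit_of (f(r := r)) r = fibre (insert r S) k r"
    using orbit_of_add_fixpoint[OF True r] new by (auto simp: fibre_def)
  ultimately show ?thesis using True r
    by (simp add: cyclic_on_fibres_def bij_betw_add_fixpoint_iff)
next
  case False
  then show ?thesis using r by (simp add: cyclic_on_fibres_def bij_betw_add_fixpoint_iff)
qed

lemma fibre_insert:
  "k r = k z \<Longrightarrow> fibre (insert r S) k u = (if k u = k z then insert r (fibre S k u) else fibre S k u)"
  by (auto simp: fibre_def)

lemma orbits_eq_fibres_insert_after:
  assumes fin: "finite S" and bij: "bij_betw f S S" and z: "z \<in> S" and r: "r \<notin> S" and key: "k r = k z"
    and fibres: "\<forall>u\<in>S. orbit_of f u = fibre S k u"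
  shows "\<forall>u\<in>insert r S. orbit_of (insert_after z r f) u = fibre (insert r S) k u"
proof
  fix u assume u: "u \<in> insert r S"
  have Oz: "orbit_of f z = fibre S k z" using fibres z by simp
  show "orbit_of (insert_after z r f) u = fibre (insert r S) k u"
  proof (cases "u \<in> insert r (orbit_of f z)")
    case True
    then have "k u = k z" using Oz key by (auto simp: fibre_def)
    then show ?thesis
      using True orbit_of_insert_after[OF fin bij z r u] fibre_insert[of k r z, OF key] Oz by (simp add: fibre_def)
  next
    case False
    then have "u \<in> S" "k u \<noteq> k z" using u Oz by (auto simp: fibre_def)
    then show ?thesis using False orbit_of_insert_after[OF fin bij z r u] fibre_insert[of k r z, OF key] fibres by simp
  qed
qed

lemma orbits_eq_fibres_insert_afterD:
  assumes fin: "finite S" and bij: "bij_betw f S S" and z: "z \<in> S" and r: "r \<notin> S" and key: "k r = k z"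
    and fibres: "\<forall>u\<in>insert r S. orbit_of (insert_after z r f) u = fibre (insert r S) k u"
  shows "\<forall>u\<in>S. orbit_of f u = fibre S k u"
proof
  have "insert r (orbit_of f z) = fibre (insert r S) k z"
    using fibres z orbit_of_insert_after_self[OF bij z r] by simp
  moreover have "r \<notin> fibre S k z" "r \<notin> orbit_of f z"
    using r orbit_of_subset_carrier[OF z bij] by (auto simp: fibre_def)
  ultimately have Oz: "orbit_of f z = fibre S k z"
    using fibre_insert[of k r z S z, OF key] by (metis Diff_insert_absorb)
  fix u assume u: "u \<in> S"
  show "orbit_of f u = fibre S k u"
  proof (cases "u \<in> orbit_of f z")
    case True
    then have "k u = k z" using Oz by (simp add: fibre_def)
    then show ?thesis using orbit_of_eq[OF fin bij z True] Oz by (simp add: fibre_def)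
  next
    case False
    then have "k u \<noteq> k z" using Oz u by (auto simp: fibre_def)
    then show ?thesis
      using fibres u False orbit_of_insert_after[OF fin bij z r, of u] r fibre_insert[of k r z, OF key] by auto
  qed
qed

lemma cyclic_on_fibres_insert_after_iff:
  assumes fin: "finite S" and z: "z \<in> S" and r: "r \<notin> S" and key: "k r = k z"
  shows "cyclic_on_fibres (insert_after z r f) (insert r S) k \<longleftrightarrow> cyclic_on_fibres f S k"
proof (cases "bij_betw f S S")
  case True
  then have "bij_betw (insert_after z r f) (insert r S) (insert r S)"
    using z r by (simp add: bij_betw_insert_after_iff)
  then show ?thesis unfolding cyclic_on_fibres_def
    using True orbits_eq_fibres_insert_after[OF fin True z r key]
      orbits_eq_fibres_insert_afterD[OF fin True z r key]
    by blast
next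
  case False
  then show ?thesis using z r by (simp add: cyclic_on_fibres_def bij_betw_insert_after_iff)
qed

fun insert_path :: "'a \<Rightarrow> 'a list \<Rightarrow> ('a \<Rightarrow> 'a) \<Rightarrow> 'a \<Rightarrow> 'a" where
  "insert_path z [] f = f"
| "insert_path z (r # rs) f = insert_path r rs (insert_after z r f)"

lemma insert_path_outside: "u \<notin> insert z (set rs) \<Longrightarrow> insert_path z rs f u = f u"
  by (induction rs arbitrary: z f) (auto simp: insert_after_def)

lemma bij_betw_insert_path:
  assumes "bij_betw f S S" "z \<in> S" "distinct rs" "set rs \<inter> S = {}"
  shows "bij_betw (insert_path z rs f) (set rs \<union> S) (set rs \<union> S)"
  using assms
proof (induction rs arbitrary: z f S)
  case (Cons r rs)
  then have "bij_betw (insert_after z r f) (insert r S) (insert r S)"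
    by (simp add: bij_betw_insert_after_iff)
  then show ?case using Cons.IH[of "insert_after z r f" "insert r S" r] Cons.prems by auto
qed simp

lemma card_orbits_insert_path:
  assumes "finite S" "bij_betw f S S" "z \<in> S" "distinct rs" "set rs \<inter> S = {}"
  shows "card (orbit_of (insert_path z rs f) ` (set rs \<union> S)) = card (orbit_of f ` S)"
  using assms
proof (induction rs arbitrary: z f S)
  case (Cons r rs)
  have r: "r \<notin> S" using Cons.prems by auto
  then have "bij_betw (insert_after z r f) (insert r S) (insert r S)"
    using Cons.prems by (simp add: bij_betw_insert_after_iff)
  then show ?case
    using Cons.IH[of "insert r S" "insert_after z r f" r] Cons.prems
      card_orbits_insert_after[OF _ _ _ r]
    by auto
qed simp

lemma cyclic_on_fibres_insert_path_iff:
  assumes "finite S" "z \<in> S" "distinct rs" "set rs \<inter> S = {}" "\<And>r. r \<in> set rs \<Longrightarrow> k r = k z"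
  shows "cyclic_on_fibres (insert_path z rs f) (set rs \<union> S) k \<longleftrightarrow> cyclic_on_fibres f S k"
  using assms
proof (induction rs arbitrary: z f S)
  case (Cons r rs)
  have "r \<notin> S" "k r = k z" using Cons.prems by auto
  then show ?case
    using Cons.IH[of "insert r S" r "insert_after z r f"] Cons.prems
      cyclic_on_fibres_insert_after_iff[of S z r k f]
    by auto
qed simp

lemma ex_cyclic_on_fibres:
  assumes "finite S"
  shows "\<exists>f. cyclic_on_fibres f S k \<and> (\<forall>u. u \<notin> S \<longrightarrow> f u = u)"
  using assms
proof (induction S rule: finite_induct)
  case empty
  show ?case by (rule exI[of _ id]) (simp add: cyclic_on_fibres_def bij_betw_def)
next
  case (insert z S)
  then obtain f where f: "cyclic_on_fibres f S k" "\<forall>u. u \<notin> S \<longrightarrow> f u = u" by blast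
  show ?case
  proof (cases "\<exists>z0\<in>S. k z0 = k z")
    case True
    then obtain z0 where "z0 \<in> S" "k z = k z0" by auto
    then have "cyclic_on_fibres (insert_after z0 z f) (insert z S) k"
      using f(1) insert.hyps by (simp add: cyclic_on_fibres_insert_after_iff)
    moreover have "\<forall>u. u \<notin> insert z S \<longrightarrow> insert_after z0 z f u = u"
      using f(2) \<open>z0 \<in> S\<close> by (auto simp: insert_after_def)
    ultimately show ?thesis by blast
  next
    case False
    then have "cyclic_on_fibres (f(z := z)) (insert z S) k"
      using f(1) insert.hyps by (subst cyclic_on_fibres_add_fixpoint_iff) auto
    moreover have "\<forall>u. u \<notin> insert z S \<longrightarrow> (f(z := z)) u = u" using f(2) by simp
    ultimately show ?thesis by blast
  qed
qed

section \<open>Counting cycles through detours\<close>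

lemma card_orbits_comp_transpose:
  assumes fin: "finite S" and bij: "bij_betw f S S" and p: "p \<in> S" and q: "q \<in> S"
  shows "card (orbit_of f ` S) \<le> card (orbit_of (f \<circ> transpose p q) ` S) + 1"
proof -
  define h where "h = f \<circ> transpose p q"
  define Opq where "Opq = orbit_of f p \<union> orbit_of f q"
  define C where "C = orbit_of f ` (S - Opq)"
  have finC: "finite C" using fin by (simp add: C_def)
  have orbit_h: "orbit_of h u = orbit_of f u" if u: "u \<in> S" "u \<notin> Opq" for u
  proof (rule orbit_of_cong_on_orbit)
    fix y assume "y \<in> orbit_of f u"
    then have "u \<in> orbit_of f y" by (rule orbit_of_sym[OF fin bij u(1)])
    then have "y \<noteq> p" "y \<noteq> q" using u(2) by (auto simp: Opq_def)
    then show "h y = f y" by (simp add: h_def)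
  qed
  have "orbit_of f u \<in> insert (orbit_of f p) (insert (orbit_of f q) C)" if u: "u \<in> S" for u
  proof (cases "u \<in> Opq")
    case True
    then show ?thesis
      unfolding Opq_def using orbit_of_eq[OF fin bij p, of u] orbit_of_eq[OF fin bij q, of u] by blast
  next
    case False
    then show ?thesis using u by (simp add: C_def)
  qed
  then have "card (orbit_of f ` S) \<le> card (insert (orbit_of f p) (insert (orbit_of f q) C))"
    using finC by (intro card_mono) auto
  also have "\<dots> \<le> card C + 2" using finC by (simp add: card_insert_if)
  finally have "card (orbit_of f ` S) \<le> card C + 2" .
  have "C \<subseteq> orbit_of h ` S"
  proof
    fix X assume "X \<in> C"
    then obtain u where "u \<in> S" "u \<notin> Opq" "X = orbit_of f u" by (auto simp: C_def)
    then show "X \<in> orbit_of h ` S" using orbit_h[of u] by blast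
  qed
  then have "insert (orbit_of h p) C \<subseteq> orbit_of h ` S" using p by blast
  moreover have "orbit_of h p \<notin> C"
  proof
    assume "orbit_of h p \<in> C"
    then obtain u where u: "u \<in> S" "u \<notin> Opq" "orbit_of h p = orbit_of f u" by (auto simp: C_def)
    then have "p \<in> orbit_of f u" using self_in_orbit_of[of p h] orbit_h[of u] by simp
    then have "u \<in> orbit_of f p" by (rule orbit_of_sym[OF fin bij u(1)])
    then show False using u(2) by (simp add: Opq_def)
  qed
  ultimately have "card C + 1 \<le> card (orbit_of h ` S)"
    using card_mono[OF finite_imageI[OF fin]] finC by (metis Suc_eq_plus1 card_insert_disjoint)
  with \<open>card (orbit_of f ` S) \<le> card C + 2\<close> show ?thesis by (simp add: h_def)
qed

lemma card_orbits_parallel_detours: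
  assumes fin: "finite S" and bij: "bij_betw f S S" and p: "p \<in> S" and q: "q \<in> S" and pq: "p \<noteq> q"
    and distinct: "distinct [r1, r2, r3, r4, r5, r6]" and new: "{r1, r2, r3, r4, r5, r6} \<inter> S = {}"
    and g_eq: "\<And>u. u \<in> S \<Longrightarrow> u \<noteq> p \<Longrightarrow> u \<noteq> q \<Longrightarrow> g u = f u"
    and path_p: "g p = r1" "g r1 = r2" "g r2 = r3" "g r3 = r4" "g r4 = f p"
    and path_q: "g q = r5" "g r5 = r6" "g r6 = f q"
  shows "card (orbit_of g ` ({r1, r2, r3, r4, r5, r6} \<union> S)) = card (orbit_of f ` S)"
proof -
  define f1 where "f1 = insert_path p [r1, r2, r3, r4] f"
  define S1 where "S1 = {r1, r2, r3, r4} \<union> S"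
  have bij1: "bij_betw f1 S1 S1" and card1: "card (orbit_of f1 ` S1) = card (orbit_of f ` S)"
    using bij_betw_insert_path[OF bij p, of "[r1, r2, r3, r4]"]
      card_orbits_insert_path[OF fin bij p, of "[r1, r2, r3, r4]"] distinct new
    by (simp_all add: f1_def S1_def)
  define f2 where "f2 = insert_path q [r5, r6] f1"
  have S2: "{r1, r2, r3, r4, r5, r6} \<union> S = set [r5, r6] \<union> S1" by (auto simp: S1_def)
  have q1: "q \<in> S1" and new1: "set [r5, r6] \<inter> S1 = {}" using q distinct new by (auto simp: S1_def)
  have bij2: "bij_betw f2 ({r1, r2, r3, r4, r5, r6} \<union> S) ({r1, r2, r3, r4, r5, r6} \<union> S)"
    unfolding S2 f2_def using bij_betw_insert_path[OF bij1 q1 _ new1] distinct by simp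
  have card2: "card (orbit_of f2 ` ({r1, r2, r3, r4, r5, r6} \<union> S)) = card (orbit_of f ` S)"
    unfolding S2 f2_def using card_orbits_insert_path[OF _ bij1 q1 _ new1] distinct fin card1
    by (simp add: S1_def)
  have "g u = f2 u" if "u \<in> {r1, r2, r3, r4, r5, r6} \<union> S" for u
  proof -
    have "p \<notin> {r1, r2, r3, r4, r5, r6}" "q \<notin> {r1, r2, r3, r4, r5, r6}" using p q new by auto
    then show ?thesis
      using that distinct pq g_eq path_p path_q new
      by (auto simp: f1_def f2_def insert_after_def)
  qed
  then have "orbit_of g ` ({r1, r2, r3, r4, r5, r6} \<union> S) = orbit_of f2 ` ({r1, r2, r3, r4, r5, r6} \<union> S)"
    using bij2 by (intro orbits_cong) (auto simp: bij_betw_def)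
  then show ?thesis using card2 by simp
qed

lemma card_orbits_crossed_detours:
  assumes fin: "finite S" and bij: "bij_betw f S S" and p: "p \<in> S" and q: "q \<in> S" and pq: "p \<noteq> q"
    and distinct: "distinct [r1, r2, r3, r4, r5, r6]" and new: "{r1, r2, r3, r4, r5, r6} \<inter> S = {}"
    and g_eq: "\<And>u. u \<in> S \<Longrightarrow> u \<noteq> p \<Longrightarrow> u \<noteq> q \<Longrightarrow> g u = f u"
    and path_p: "g p = r1" "g r1 = r2" "g r2 = f q"
    and path_q: "g q = r3" "g r3 = r4" "g r4 = f p"
    and loop: "g r5 = r6" "g r6 = r5"
  shows "card (orbit_of f ` S) \<le> card (orbit_of g ` ({r1, r2, r3, r4, r5, r6} \<union> S))"
proof -
  define f0 where "f0 = f \<circ> transpose p q"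
  have bij0: "bij_betw f0 S S" unfolding f0_def using bij p q by (intro bij_betw_trans) simp_all
  define f1 where "f1 = insert_path p [r1, r2] f0"
  define S1 where "S1 = {r1, r2} \<union> S"
  have bij1: "bij_betw f1 S1 S1" and card1: "card (orbit_of f1 ` S1) = card (orbit_of f0 ` S)"
    using bij_betw_insert_path[OF bij0 p, of "[r1, r2]"]
      card_orbits_insert_path[OF fin bij0 p, of "[r1, r2]"] distinct new
    by (simp_all add: f1_def S1_def)
  define f2 where "f2 = insert_path q [r3, r4] f1"
  define S2 where "S2 = {r3, r4} \<union> S1"
  have q1: "q \<in> S1" using q by (simp add: S1_def)
  have bij2: "bij_betw f2 S2 S2" and card2: "card (orbit_of f2 ` S2) = card (orbit_of f1 ` S1)"
    using bij_betw_insert_path[OF bij1 q1, of "[r3, r4]"]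
      card_orbits_insert_path[OF _ bij1 q1, of "[r3, r4]"] fin distinct new
    by (simp_all add: f2_def S2_def S1_def)
  define f3 where "f3 = f2(r5 := r5)"
  have r5: "r5 \<notin> S2" using distinct new by (auto simp: S2_def S1_def)
  have bij3: "bij_betw f3 (insert r5 S2) (insert r5 S2)"
    and card3: "card (orbit_of f3 ` insert r5 S2) = card (orbit_of f2 ` S2) + 1"
    using bij_betw_add_fixpoint_iff[OF r5] bij2 card_orbits_add_fixpoint[OF _ bij2 r5] fin
    by (simp_all add: f3_def S2_def S1_def)
  define f4 where "f4 = insert_path r5 [r6] f3"
  have S4: "{r1, r2, r3, r4, r5, r6} \<union> S = set [r6] \<union> insert r5 S2" by (auto simp: S2_def S1_def)
  have new4: "set [r6] \<inter> insert r5 S2 = {}" using distinct new by (auto simp: S2_def S1_def)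
  have bij4: "bij_betw f4 ({r1, r2, r3, r4, r5, r6} \<union> S) ({r1, r2, r3, r4, r5, r6} \<union> S)"
    unfolding S4 f4_def using bij_betw_insert_path[OF bij3 _ _ new4] by simp
  have card4: "card (orbit_of f4 ` ({r1, r2, r3, r4, r5, r6} \<union> S)) = card (orbit_of f3 ` insert r5 S2)"
    unfolding S4 f4_def using card_orbits_insert_path[OF _ bij3 _ _ new4] fin
    by (simp add: S2_def S1_def)
  have "g u = f4 u" if "u \<in> {r1, r2, r3, r4, r5, r6} \<union> S" for u
  proof -
    have "p \<notin> {r1, r2, r3, r4, r5, r6}" "q \<notin> {r1, r2, r3, r4, r5, r6}" using p q new by auto
    then show ?thesis
      using that distinct pq g_eq path_p path_q loop new
      by (auto simp: f0_def f1_def f2_def f3_def f4_def insert_after_def transpose_def)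
  qed
  then have "orbit_of g ` ({r1, r2, r3, r4, r5, r6} \<union> S) = orbit_of f4 ` ({r1, r2, r3, r4, r5, r6} \<union> S)"
    using bij4 by (intro orbits_cong) (auto simp: bij_betw_def)
  then show ?thesis
    using card4 card3 card2 card1 card_orbits_comp_transpose[OF fin bij p q] by (simp add: f0_def)
qed

section \<open>Darts and rotation systems\<close>

definition dart_at :: "('e \<Rightarrow> 'v \<times> 'v) \<Rightarrow> 'e \<Rightarrow> 'v \<Rightarrow> 'e \<times> bool" where
  "dart_at ends e u = (e, fst (ends e) = u)"

lemma fst_dart_at [simp]: "fst (dart_at ends e u) = e"
  by (simp add: dart_at_def)

lemma dart_at_in_darts: "e \<in> E \<Longrightarrow> dart_at ends e u \<in> darts E"
  by (simp add: dart_at_def darts_def)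

lemma dart_tail_dart_at: "incident ends e u \<Longrightarrow> dart_tail ends (dart_at ends e u) = u"
  by (auto simp: dart_at_def dart_tail_def incident_def)

lemma dart_rev_dart_at:
  "ends e = (x, y) \<or> ends e = (y, x) \<Longrightarrow> x \<noteq> y \<Longrightarrow> dart_rev (dart_at ends e x) = dart_at ends e y"
  by (auto simp: dart_at_def dart_rev_def)

lemma dart_at_neq:
  "ends e = (x, y) \<or> ends e = (y, x) \<Longrightarrow> x \<noteq> y \<Longrightarrow> dart_at ends e x \<noteq> dart_at ends e y"
  by (auto simp: dart_at_def)

lemma dart_eq_dart_at:
  assumes "ends e = (x, y) \<or> ends e = (y, x)" "x \<noteq> y" "fst z = e" "dart_tail ends z = x"
  shows "z = dart_at ends e x"
  using assms by (cases z; cases "ends e") (auto simp: dart_at_def dart_tail_def split: if_splits)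

lemma darts_of_edge:
  "ends e = (x, y) \<or> ends e = (y, x) \<Longrightarrow> x \<noteq> y \<Longrightarrow> {e} \<times> UNIV = {dart_at ends e x, dart_at ends e y}"
  by (auto simp: dart_at_def UNIV_bool)

lemma incident_dart_tail:
  "z \<in> darts E \<Longrightarrow> fst z \<in> E \<and> incident ends (fst z) (dart_tail ends z)"
  unfolding darts_def dart_tail_def incident_def by (cases z) (auto split: if_splits)

lemma dart_rev_in_darts: "z \<in> darts E \<Longrightarrow> dart_rev z \<in> darts E"
  by (auto simp: darts_def dart_rev_def mem_Times_iff)

lemma dart_rev_dart_rev [simp]: "dart_rev (dart_rev z) = z"
  by (simp add: dart_rev_def)

lemma finite_darts: "finite E \<Longrightarrow> finite (darts E)"
  by (simp add: darts_def)

lemma rotation_system_iff: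
  "rotation_system V E ends \<sigma> \<longleftrightarrow>
     cyclic_on_fibres \<sigma> (darts E) (dart_tail ends) \<and> (\<forall>d. d \<notin> darts E \<longrightarrow> \<sigma> d = d)"
proof -
  have "(\<forall>d\<in>darts E. dart_tail ends (\<sigma> d) = dart_tail ends d) \<and>
      (\<forall>d\<in>darts E. \<forall>d'\<in>darts E. dart_tail ends d = dart_tail ends d' \<longrightarrow> d' \<in> orbit_of \<sigma> d)
    \<longleftrightarrow> (\<forall>d\<in>darts E. orbit_of \<sigma> d = fibre (darts E) (dart_tail ends) d)"
    if bij: "bij_betw \<sigma> (darts E) (darts E)"
  proof (intro iffI ballI)
    fix d assume H: "(\<forall>d\<in>darts E. dart_tail ends (\<sigma> d) = dart_tail ends d) \<and>
      (\<forall>d\<in>darts E. \<forall>d'\<in>darts E. dart_tail ends d = dart_tail ends d' \<longrightarrow> d' \<in> orbit_of \<sigma> d)"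
      and d: "d \<in> darts E"
    have "orbit_of \<sigma> d \<subseteq> fibre (darts E) (dart_tail ends) d"
      by (rule orbit_of_least) (use d H bij in \<open>auto simp: bij_betw_def fibre_def\<close>)
    then show "orbit_of \<sigma> d = fibre (darts E) (dart_tail ends) d" using H d by (auto simp: fibre_def)
  next
    assume H: "\<forall>d\<in>darts E. orbit_of \<sigma> d = fibre (darts E) (dart_tail ends) d"
    have "dart_tail ends (\<sigma> d) = dart_tail ends d" if "d \<in> darts E" for d
      using H that orbit_of_step[OF self_in_orbit_of, of \<sigma> d] by (auto simp: fibre_def)
    then show "(\<forall>d\<in>darts E. dart_tail ends (\<sigma> d) = dart_tail ends d) \<and>
      (\<forall>d\<in>darts E. \<forall>d'\<in>darts E. dart_tail ends d = dart_tail ends d' \<longrightarrow> d' \<in> orbit_of \<sigma> d)"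
      using H by (auto simp: fibre_def)
  qed
  then show ?thesis
    unfolding rotation_system_def cyclic_on_fibres_def orbit_of_iff[symmetric] by blast
qed

lemma num_faces_eq_card:
  "E \<noteq> {} \<Longrightarrow> num_faces E \<sigma> = card (orbit_of (\<sigma> \<circ> dart_rev) ` darts E)"
  by (simp add: num_faces_def)

lemma rotation_system_exists: "finite E \<Longrightarrow> \<exists>\<sigma>. rotation_system V E ends \<sigma>"
  using ex_cyclic_on_fibres[OF finite_darts] by (simp add: rotation_system_iff)

section \<open>Maximum genus\<close>

lemma Max_eq_Max_minus:
  fixes A B :: "int set"
  assumes A: "finite A" "A \<noteq> {}" and B: "finite B" "B \<noteq> {}"
    and AB: "\<And>a. a \<in> A \<Longrightarrow> \<exists>b\<in>B. a - k \<le> b" and BA: "\<And>b. b \<in> B \<Longrightarrow> \<exists>a\<in>A. b + k \<le> a"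
  shows "Max B = Max A - k"
proof -
  obtain b where "b \<in> B" "Max A - k \<le> b" using AB[OF Max_in[OF A]] by blast
  then have "Max A - k \<le> Max B" using Max_ge[OF B(1)] by (meson order_trans)
  moreover obtain a where "a \<in> A" "Max B + k \<le> a" using BA[OF Max_in[OF B]] by blast
  then have "Max B + k \<le> Max A" using Max_ge[OF A(1)] by (meson order_trans)
  ultimately show ?thesis by linarith
qed

lemma finite_genera:
  assumes "finite E"
  shows "finite {embedding_genus V E \<sigma> | \<sigma>. rotation_system V E ends \<sigma>}"
proof -
  have "num_faces E \<sigma> \<le> card (darts E) + 1" for \<sigma>
    using card_image_le[OF finite_darts[OF assms], of "orbit_of (\<sigma> \<circ> dart_rev)"]
    by (simp add: num_faces_def)
  then have "{embedding_genus V E \<sigma> | \<sigma>. rotation_system V E ends \<sigma>} \<subseteq>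
      (\<lambda>n. (2 - int (card V) + int (card E) - int n) div 2) ` {..card (darts E) + 1}"
    by (auto simp: embedding_genus_def)
  then show ?thesis by (rule finite_subset) simp
qed

lemma max_genus_eq_minus_one:
  assumes fin: "finite E" "finite E'"
    and euler: "int (card E') - int (card V') = int (card E) - int (card V) - 2"
    and restrict: "\<And>\<sigma>. rotation_system V E ends \<sigma> \<Longrightarrow>
      \<exists>\<sigma>'. rotation_system V' E' ends \<sigma>' \<and> num_faces E' \<sigma>' \<le> num_faces E \<sigma>"
    and extend: "\<And>\<sigma>'. rotation_system V' E' ends \<sigma>' \<Longrightarrow>
      \<exists>\<sigma>. rotation_system V E ends \<sigma> \<and> num_faces E \<sigma> = num_faces E' \<sigma>'"
  shows "max_genus V' E' ends = max_genus V E ends - 1"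
proof -
  define X where "X = 2 - int (card V) + int (card E)"
  have genus: "embedding_genus V E \<sigma> = (X - int (num_faces E \<sigma>)) div 2" for \<sigma>
    by (simp add: embedding_genus_def X_def)
  have genus': "embedding_genus V' E' \<sigma>' = (X - int (num_faces E' \<sigma>')) div 2 - 1" for \<sigma>'
  proof -
    have "embedding_genus V' E' \<sigma>' = (X - int (num_faces E' \<sigma>') + (- 1) * 2) div 2"
      using euler by (simp add: embedding_genus_def X_def algebra_simps)
    then show ?thesis by simp
  qed
  define S where "S = {embedding_genus V E \<sigma> | \<sigma>. rotation_system V E ends \<sigma>}"
  define S' where "S' = {embedding_genus V' E' \<sigma>' | \<sigma>'. rotation_system V' E' ends \<sigma>'}"
  have "Max S' = Max S - 1"
  proof (rule Max_eq_Max_minus)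
    show "finite S" "finite S'" using finite_genera fin by (simp_all add: S_def S'_def)
    show "S \<noteq> {}" "S' \<noteq> {}" using rotation_system_exists fin by (fastforce simp: S_def S'_def)+
  next
    fix g assume "g \<in> S"
    then obtain \<sigma> where "rotation_system V E ends \<sigma>" "g = embedding_genus V E \<sigma>" by (auto simp: S_def)
    moreover from restrict[OF this(1)] obtain \<sigma>' where
      "rotation_system V' E' ends \<sigma>'" "num_faces E' \<sigma>' \<le> num_faces E \<sigma>" by blast
    ultimately show "\<exists>g'\<in>S'. g - 1 \<le> g'"
      unfolding S'_def by (auto simp: genus genus' intro!: zdiv_mono1)
  next
    fix g' assume "g' \<in> S'"
    then obtain \<sigma>' where "rotation_system V' E' ends \<sigma>'" "g' = embedding_genus V' E' \<sigma>'"
      by (auto simp: S'_def)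
    moreover from extend[OF this(1)] obtain \<sigma> where
      "rotation_system V E ends \<sigma>" "num_faces E \<sigma> = num_faces E' \<sigma>'" by blast
    ultimately show "\<exists>g\<in>S. g' + 1 \<le> g"
      unfolding S_def by (auto simp: genus genus')
  qed
  then show ?thesis by (simp add: max_genus_def S_def S'_def)
qed

section \<open>Deleting a vertex of degree three on a double edge\<close>

locale beta_vertex =
  fixes E :: "'e set" and ends :: "'e \<Rightarrow> 'v \<times> 'v" and v v' w w' :: 'v and a b c d :: 'e
  assumes finite_E: "finite E"
    and v_neq: "v \<noteq> v'" and w_neq: "w \<noteq> v" "w \<noteq> v'" and w'_neq: "w' \<noteq> v" "w' \<noteq> v'"
    and edges_in: "a \<in> E" "b \<in> E" "c \<in> E" "d \<in> E"
    and ends_a: "ends a = (v, v') \<or> ends a = (v', v)"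
    and ends_b: "ends b = (v, v') \<or> ends b = (v', v)"
    and ends_c: "ends c = (v, w) \<or> ends c = (w, v)"
    and ends_d: "ends d = (v', w') \<or> ends d = (w', v')"
    and a_neq_b: "a \<noteq> b"
    and incident_v: "{e\<in>E. incident ends e v} = {a, b, c}"
    and incident_v': "{e\<in>E. incident ends e v'} = {a, b, d}"
    and w_kept: "\<exists>e\<in>E. e \<noteq> c \<and> incident ends e w"
begin

definition "E' = E - {a, b, c}"
definition "D = darts E"
definition "D' = darts E'"

definition "av = dart_at ends a v"
definition "av' = dart_at ends a v'"
definition "bv = dart_at ends b v"
definition "bv' = dart_at ends b v'"
definition "cv = dart_at ends c v"
definition "cw = dart_at ends c w"
definition "dv' = dart_at ends d v'"
definition "dw' = dart_at ends d w'"

lemmas dart_defs = av_def av'_def bv_def bv'_def cv_def cw_def dv'_def dw'_def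

lemma ends_sym:
  "ends a = (v', v) \<or> ends a = (v, v')" "ends b = (v', v) \<or> ends b = (v, v')"
  "ends c = (w, v) \<or> ends c = (v, w)" "ends d = (w', v') \<or> ends d = (v', w')"
  using ends_a ends_b ends_c ends_d by blast+

lemma edges_distinct: "a \<noteq> c" "b \<noteq> c" "a \<noteq> d" "b \<noteq> d" "c \<noteq> d"
  using ends_a ends_b ends_c ends_d v_neq w_neq w'_neq by auto

lemma dart_tails:
  "dart_tail ends av = v" "dart_tail ends av' = v'" "dart_tail ends bv = v" "dart_tail ends bv' = v'"
  "dart_tail ends cv = v" "dart_tail ends cw = w" "dart_tail ends dv' = v'" "dart_tail ends dw' = w'"
  unfolding dart_defs using ends_a ends_b ends_c ends_d
  by (auto intro!: dart_tail_dart_at simp: incident_def)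

lemma dart_revs:
  "dart_rev av = av'" "dart_rev bv = bv'" "dart_rev cv = cw" "dart_rev dv' = dw'"
  "dart_rev av' = av" "dart_rev bv' = bv" "dart_rev cw = cv" "dart_rev dw' = dv'"
  unfolding dart_defs
  by (rule dart_rev_dart_at; use ends_a ends_b ends_c ends_d v_neq w_neq w'_neq in auto)+

lemma darts_distinct: "distinct [av, av', bv, bv', cv, cw, dv', dw']"
proof -
  have "av \<noteq> av'" "bv \<noteq> bv'" "cv \<noteq> cw" "dv' \<noteq> dw'"
    unfolding dart_defs
    by (rule dart_at_neq; use ends_a ends_b ends_c ends_d v_neq w_neq w'_neq in auto)+
  moreover have "fst x \<noteq> fst y \<Longrightarrow> x \<noteq> y" for x y :: "'e \<times> bool" by auto
  ultimately show ?thesis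
    using a_neq_b edges_distinct by (auto simp: dart_defs)
qed

lemma finite_D': "finite D'" and D'_subset: "D' \<subseteq> D"
  using finite_E by (auto simp: D_def D'_def E'_def darts_def)

lemma darts_in_D: "av \<in> D" "av' \<in> D" "bv \<in> D" "bv' \<in> D" "cv \<in> D" "cw \<in> D" "dv' \<in> D" "dw' \<in> D"
  unfolding D_def dart_defs using edges_in by (auto intro: dart_at_in_darts)

lemma darts_in_D': "dv' \<in> D'" "dw' \<in> D'"
  unfolding D'_def E'_def dart_defs using edges_in edges_distinct by (auto intro: dart_at_in_darts)

lemma D_minus_D': "D - D' = {av, av', bv, bv', cv, cw}"
proof -
  have "D - D' = {a} \<times> UNIV \<union> {b} \<times> UNIV \<union> {c} \<times> UNIV"
    using edges_in by (auto simp: D_def D'_def E'_def darts_def)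
  also have "\<dots> = {av, av', bv, bv', cv, cw}"
    unfolding dart_defs
    using darts_of_edge[of ends a v v', OF ends_a v_neq] darts_of_edge[of ends b v v', OF ends_b v_neq]
      darts_of_edge[of ends c v w, OF ends_c w_neq(1)[symmetric]]
    by auto
  finally show ?thesis .
qed

lemma darts_notin_D': "av \<notin> D'" "av' \<notin> D'" "bv \<notin> D'" "bv' \<notin> D'" "cv \<notin> D'" "cw \<notin> D'"
  using D_minus_D' by blast+

lemma D_eq: "D = {av, av', bv, bv', cv, cw} \<union> D'"
  using D_minus_D' D'_subset by blast

lemma dart_rev_in_D': "z \<in> D' \<Longrightarrow> dart_rev z \<in> D'"
  unfolding D'_def by (rule dart_rev_in_darts)

lemma darts_at_v: "{z\<in>D. dart_tail ends z = v} = {av, bv, cv}"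
proof -
  have "z \<in> {av, bv, cv}" if "z \<in> D" "dart_tail ends z = v" for z
  proof -
    have "fst z \<in> {a, b, c}" using incident_dart_tail[of z E ends] that incident_v by (auto simp: D_def)
    then show ?thesis unfolding dart_defs
      using dart_eq_dart_at[of ends a v v', OF ends_a v_neq, of z]
        dart_eq_dart_at[of ends b v v', OF ends_b v_neq, of z]
        dart_eq_dart_at[of ends c v w, OF ends_c w_neq(1)[symmetric], of z] that(2)
      by auto
  qed
  then show ?thesis using darts_in_D dart_tails by auto
qed

lemma darts_at_v': "{z\<in>D. dart_tail ends z = v'} = {av', bv', dv'}"
proof -
  have "z \<in> {av', bv', dv'}" if "z \<in> D" "dart_tail ends z = v'" for z
  proof -
    have "fst z \<in> {a, b, d}" using incident_dart_tail[of z E ends] that incident_v' by (auto simp: D_def)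
    then show ?thesis unfolding dart_defs
      using dart_eq_dart_at[of ends a v' v, OF ends_sym(1) v_neq[symmetric], of z]
        dart_eq_dart_at[of ends b v' v, OF ends_sym(2) v_neq[symmetric], of z]
        dart_eq_dart_at[of ends d v' w', OF ends_d w'_neq(2)[symmetric], of z] that(2)
      by auto
  qed
  then show ?thesis using darts_in_D dart_tails by auto
qed

lemma dart_tail_D'_neq: "z \<in> D' \<Longrightarrow> dart_tail ends z \<noteq> v"
  using darts_at_v D_minus_D' D'_subset by blast

lemma fibre_v'_D': "{z\<in>D'. dart_tail ends z = v'} = {dv'}"
  using darts_at_v' D_minus_D' D'_subset darts_in_D' dart_tails by blast

lemma dart_at_w_in_D':
  assumes "z \<in> D" "dart_tail ends z = w" "z \<noteq> cw"
  shows "z \<in> D'"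
proof (rule ccontr)
  assume "z \<notin> D'"
  then have "z \<in> {av, av', bv, bv', cv, cw}" using assms(1) D_minus_D' by blast
  then show False using assms(2,3) dart_tails w_neq by (elim insertE emptyE) simp_all
qed

lemma ex_dart_at_w_in_D': "\<exists>z\<in>D'. dart_tail ends z = w"
proof -
  obtain e where e: "e \<in> E" "e \<noteq> c" "incident ends e w" using w_kept by blast
  have "e \<noteq> a" "e \<noteq> b" using e(3) ends_a ends_b w_neq by (auto simp: incident_def)
  then have "dart_at ends e w \<in> D'" using e by (auto simp: D'_def E'_def intro: dart_at_in_darts)
  then show ?thesis using dart_tail_dart_at[OF e(3)] by blast
qed

lemma dv'_fixed:
  assumes "cyclic_on_fibres \<sigma>' D' (dart_tail ends)" shows "\<sigma>' dv' = dv'"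
proof -
  have "orbit_of \<sigma>' dv' = {dv'}"
    using assms darts_in_D'(1) fibre_v'_D' dart_tails by (simp add: cyclic_on_fibres_def fibre_def)
  then show ?thesis using orbit_of_step[OF self_in_orbit_of, of \<sigma>' dv'] by simp
qed

lemma bij_betw_comp_dart_rev: "bij_betw \<sigma>' D' D' \<Longrightarrow> bij_betw (\<sigma>' \<circ> dart_rev) D' D'"
proof -
  have "bij_betw dart_rev D' D'" by (rule bij_betw_byWitness[of _ dart_rev]) (auto simp: dart_rev_in_D')
  then show "bij_betw \<sigma>' D' D' \<Longrightarrow> bij_betw (\<sigma>' \<circ> dart_rev) D' D'" by (rule bij_betw_trans)
qed

text \<open>The inverse of deleting v: cw is put after x in the rotation at w, the darts s1, s2 of
  a, b at v' are put after dv', and the rotation at v becomes (av t2 t3).\<close>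
definition glue ::
  "('e \<times> bool \<Rightarrow> 'e \<times> bool) \<Rightarrow> 'e \<times> bool \<Rightarrow> 'e \<times> bool \<Rightarrow> 'e \<times> bool \<Rightarrow> 'e \<times> bool \<Rightarrow> 'e \<times> bool
    \<Rightarrow> 'e \<times> bool \<Rightarrow> 'e \<times> bool" where
  "glue \<sigma>' x s1 s2 t2 t3 =
     insert_path av [t2, t3] ((insert_path dv' [s1, s2] (insert_path x [cw] \<sigma>'))(av := av))"

context
  fixes x s1 s2 t2 t3
  assumes x: "x \<in> D'" "dart_tail ends x = w"
    and s: "{s1, s2} = {av', bv'}" "s1 \<noteq> s2"
    and t: "{t2, t3} = {bv, cv}" "t2 \<noteq> t3"
begin

lemma glue_darts_distinct:
  "distinct [x, cw, dv', s1, s2, av, t2, t3]" "distinct [t3, t2, av, s2, s1, dv', cw, x]"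
proof -
  have "x \<notin> {cw, av', bv', av, bv, cv}" using x D_minus_D' by auto
  moreover have "x \<noteq> dv'" using x dart_tails w_neq by auto
  moreover have "(s1 = av' \<and> s2 = bv') \<or> (s1 = bv' \<and> s2 = av')"
    "(t2 = bv \<and> t3 = cv) \<or> (t2 = cv \<and> t3 = bv)"
    using s t by (simp_all add: doubleton_eq_iff)
  ultimately show "distinct [x, cw, dv', s1, s2, av, t2, t3]"
    using darts_distinct by (elim disjE conjE) auto
  then show "distinct [t3, t2, av, s2, s1, dv', cw, x]" by auto
qed

lemma glue_apply:
  "glue \<sigma>' x s1 s2 t2 t3 x = cw" "glue \<sigma>' x s1 s2 t2 t3 cw = \<sigma>' x"
  "glue \<sigma>' x s1 s2 t2 t3 dv' = s1" "glue \<sigma>' x s1 s2 t2 t3 s1 = s2" "glue \<sigma>' x s1 s2 t2 t3 s2 = \<sigma>' dv'"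
  "glue \<sigma>' x s1 s2 t2 t3 av = t2" "glue \<sigma>' x s1 s2 t2 t3 t2 = t3" "glue \<sigma>' x s1 s2 t2 t3 t3 = av"
  using glue_darts_distinct by (simp_all add: glue_def insert_after_apply)

lemma glue_apply_other:
  "u \<notin> {x, cw, dv', s1, s2, av, t2, t3} \<Longrightarrow> glue \<sigma>' x s1 s2 t2 t3 u = \<sigma>' u"
  by (simp add: glue_def insert_path_outside insert_after_apply)

lemma cyclic_on_fibres_glue_iff:
  "cyclic_on_fibres (glue \<sigma>' x s1 s2 t2 t3) D (dart_tail ends) \<longleftrightarrow>
   cyclic_on_fibres \<sigma>' D' (dart_tail ends)"
proof -
  define S1 where "S1 = set [cw] \<union> D'"
  define S2 where "S2 = set [s1, s2] \<union> S1"
  have tails: "dart_tail ends s1 = v'" "dart_tail ends s2 = v'"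
    "dart_tail ends t2 = v" "dart_tail ends t3 = v"
    using s t dart_tails by (auto simp: doubleton_eq_iff)
  have new: "cw \<notin> D'" "s1 \<notin> S1" "s2 \<notin> S1" "av \<notin> S2" "t2 \<notin> insert av S2" "t3 \<notin> insert av S2"
    using glue_darts_distinct s t D_minus_D' by (auto simp: S1_def S2_def doubleton_eq_iff)
  have S2_not_v: "dart_tail ends u \<noteq> v" if u: "u \<in> S2" for u
  proof -
    consider "u \<in> D'" | "u = cw" | "u = s1" | "u = s2" using u unfolding S1_def S2_def by auto
    then show ?thesis
      by cases (use dart_tail_D'_neq tails dart_tails v_neq w_neq in simp_all)
  qed
  have D_chain: "D = set [t2, t3] \<union> insert av S2"
    using D_eq s t by (auto simp: S1_def S2_def)
  have fin: "finite S1" "finite S2" using finite_D' by (simp_all add: S1_def S2_def)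
  have "cyclic_on_fibres (insert_path x [cw] \<sigma>') S1 (dart_tail ends) \<longleftrightarrow>
      cyclic_on_fibres \<sigma>' D' (dart_tail ends)"
    unfolding S1_def using finite_D' x new dart_tails by (intro cyclic_on_fibres_insert_path_iff) auto
  moreover have "cyclic_on_fibres (insert_path dv' [s1, s2] f) S2 (dart_tail ends) \<longleftrightarrow>
      cyclic_on_fibres f S1 (dart_tail ends)" for f
    unfolding S2_def using fin darts_in_D' new s(2) tails dart_tails
    by (intro cyclic_on_fibres_insert_path_iff) (auto simp: S1_def)
  moreover have "cyclic_on_fibres (f(av := av)) (insert av S2) (dart_tail ends) \<longleftrightarrow>
      cyclic_on_fibres f S2 (dart_tail ends)" for f
    using new S2_not_v dart_tails by (intro cyclic_on_fibres_add_fixpoint_iff) auto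
  moreover have "cyclic_on_fibres (insert_path av [t2, t3] f) D (dart_tail ends) \<longleftrightarrow>
      cyclic_on_fibres f (insert av S2) (dart_tail ends)" for f
    unfolding D_chain using fin new t(2) tails dart_tails
    by (intro cyclic_on_fibres_insert_path_iff) auto
  ultimately show ?thesis by (simp add: glue_def)
qed

lemma glue_outside: "u \<notin> D \<Longrightarrow> glue \<sigma>' x s1 s2 t2 t3 u = \<sigma>' u"
proof (rule glue_apply_other)
  have "{x, cw, dv', s1, s2, av, t2, t3} \<subseteq> D"
    using x(1) D'_subset darts_in_D s t by (auto simp: doubleton_eq_iff)
  then show "u \<notin> D \<Longrightarrow> u \<notin> {x, cw, dv', s1, s2, av, t2, t3}" by blast
qed

lemma dart_rev_x: "dart_rev x \<in> D'" "dart_rev x \<noteq> dw'"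
proof -
  show "dart_rev x \<in> D'" using x(1) by (rule dart_rev_in_D')
  have "x \<noteq> dv'" using glue_darts_distinct by simp
  then show "dart_rev x \<noteq> dw'" using dart_revs(8) by (metis dart_rev_dart_rev)
qed

lemma glue_comp_dart_rev:
  assumes "u \<in> D'" "u \<noteq> dart_rev x" "u \<noteq> dw'"
  shows "(glue \<sigma>' x s1 s2 t2 t3 \<circ> dart_rev) u = (\<sigma>' \<circ> dart_rev) u"
proof -
  have "dart_rev u \<in> D'" using assms(1) by (rule dart_rev_in_D')
  moreover have "dart_rev u \<noteq> x" "dart_rev u \<noteq> dv'"
    using assms(2,3) dart_revs(4) by (metis dart_rev_dart_rev)+
  moreover have "{cw, s1, s2, av, t2, t3} \<inter> D' = {}" using D_minus_D' s t by auto
  ultimately show ?thesis by (auto intro!: glue_apply_other)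
qed

lemma card_faces_glue_parallel:
  assumes cyc: "cyclic_on_fibres \<sigma>' D' (dart_tail ends)" and parallel: "(s1 = av') = (t2 = bv)"
  shows "card (orbit_of (glue \<sigma>' x s1 s2 t2 t3 \<circ> dart_rev) ` D) = card (orbit_of (\<sigma>' \<circ> dart_rev) ` D')"
proof -
  note detours = card_orbits_parallel_detours[OF finite_D' bij_betw_comp_dart_rev[OF cyclic_on_fibres_bij[OF cyc]]
      dart_rev_x(1) darts_in_D'(2) dart_rev_x(2)]
  note facts = darts_distinct darts_notin_D' glue_apply dv'_fixed[OF cyc] dart_revs glue_comp_dart_rev
  consider (A) "s1 = av'" "s2 = bv'" "t2 = bv" "t3 = cv" | (B) "s1 = bv'" "s2 = av'" "t2 = cv" "t3 = bv"
    using s t parallel darts_distinct by (auto simp: doubleton_eq_iff)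
  then show ?thesis
  proof cases
    case A
    have split: "D = {cw, av, bv', cv, av', bv} \<union> D'" using D_eq by auto
    show ?thesis unfolding split by (rule detours) (use facts A in auto)
  next
    case B
    have split: "D = {cw, bv, av', cv, bv', av} \<union> D'" using D_eq by auto
    show ?thesis unfolding split by (rule detours) (use facts B in auto)
  qed
qed

lemma card_faces_glue_ge:
  assumes cyc: "cyclic_on_fibres \<sigma>' D' (dart_tail ends)"
  shows "card (orbit_of (\<sigma>' \<circ> dart_rev) ` D') \<le> card (orbit_of (glue \<sigma>' x s1 s2 t2 t3 \<circ> dart_rev) ` D)"
proof (cases "(s1 = av') = (t2 = bv)")
  case True
  then show ?thesis using card_faces_glue_parallel[OF cyc] by simp
next
  case crossed: False
  note detours = card_orbits_crossed_detours[OF finite_D' bij_betw_comp_dart_rev[OF cyclic_on_fibres_bij[OF cyc]]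
      dart_rev_x(1) darts_in_D'(2) dart_rev_x(2)]
  note facts = darts_distinct darts_notin_D' glue_apply dv'_fixed[OF cyc] dart_revs glue_comp_dart_rev
  consider (C) "s1 = bv'" "s2 = av'" "t2 = bv" "t3 = cv" | (D) "s1 = av'" "s2 = bv'" "t2 = cv" "t3 = bv"
    using s t crossed darts_distinct by (auto simp: doubleton_eq_iff)
  then show ?thesis
  proof cases
    case C
    have split: "D = {cw, av, bv', cv, av', bv} \<union> D'" using D_eq by auto
    show ?thesis unfolding split by (rule detours) (use facts C in auto)
  next
    case D
    have split: "D = {cw, bv, av', cv, av, bv'} \<union> D'" using D_eq by auto
    show ?thesis unfolding split by (rule detours) (use facts D in auto)
  qed
qed

end

lemma E_nonempty: "E \<noteq> {}" and E'_nonempty: "E' \<noteq> {}"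
  using edges_in edges_distinct by (auto simp: E'_def)

lemma predecessor_of_cw:
  assumes cyc: "cyclic_on_fibres \<sigma> D (dart_tail ends)"
  obtains x where "x \<in> D'" "dart_tail ends x = w" "\<sigma> x = cw"
proof -
  have orbit: "\<And>u. u \<in> D \<Longrightarrow> orbit_of \<sigma> u = {u'\<in>D. dart_tail ends u' = dart_tail ends u}"
    using cyc by (simp add: cyclic_on_fibres_def fibre_def)
  obtain x where x: "x \<in> D" "\<sigma> x = cw"
    using cyclic_on_fibres_bij[OF cyc] darts_in_D(6) by (metis bij_betw_def imageE)
  have "\<sigma> x \<in> orbit_of \<sigma> x" by (rule orbit_of_step[OF self_in_orbit_of])
  then have tx: "dart_tail ends x = w" using orbit[OF x(1)] x(2) dart_tails by simp
  have "\<sigma> cw \<noteq> cw"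
  proof
    assume fixed: "\<sigma> cw = cw"
    obtain k where k: "k \<in> D'" "dart_tail ends k = w" using ex_dart_at_w_in_D' by blast
    then have "k \<in> D" using D'_subset by blast
    then have "k \<in> orbit_of \<sigma> cw" using orbit[OF darts_in_D(6)] k(2) by (simp add: dart_tails)
    then show False using fixed orbit_of_fixpoint[of \<sigma> cw] darts_notin_D'(6) k(1) by simp
  qed
  then have "x \<in> D'" using dart_at_w_in_D'[OF x(1) tx] x(2) by auto
  then show ?thesis using tx x(2) by (rule that)
qed

lemma rotations_at_v_v':
  assumes cyc: "cyclic_on_fibres \<sigma> D (dart_tail ends)"
  obtains s1 s2 t2 t3 where "{s1, s2} = {av', bv'}" "s1 \<noteq> s2" "{t2, t3} = {bv, cv}" "t2 \<noteq> t3"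
    "\<sigma> av = t2" "\<sigma> t2 = t3" "\<sigma> t3 = av" "\<sigma> dv' = s1" "\<sigma> s1 = s2" "\<sigma> s2 = dv'"
proof -
  have orbit: "\<And>u. u \<in> D \<Longrightarrow> orbit_of \<sigma> u = {u'\<in>D. dart_tail ends u' = dart_tail ends u}"
    using cyc by (simp add: cyclic_on_fibres_def fibre_def)
  have inj: "inj_on \<sigma> A" if "A \<subseteq> D" for A
    using cyclic_on_fibres_bij[OF cyc] that by (auto simp: bij_betw_def intro: inj_on_subset)
  have "(\<sigma> av = bv \<and> \<sigma> bv = cv \<and> \<sigma> cv = av) \<or> (\<sigma> av = cv \<and> \<sigma> cv = bv \<and> \<sigma> bv = av)"
  proof (rule three_cycle_cases)
    show "inj_on \<sigma> {av, bv, cv}" using darts_in_D by (intro inj) auto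
    show "orbit_of \<sigma> av = {av, bv, cv}" using orbit[OF darts_in_D(1)] darts_at_v by (simp add: dart_tails)
  qed (use darts_distinct in auto)
  then have at_v: "{\<sigma> av, \<sigma> (\<sigma> av)} = {bv, cv}" "\<sigma> av \<noteq> \<sigma> (\<sigma> av)" "\<sigma> (\<sigma> (\<sigma> av)) = av"
    using darts_distinct by auto
  have "(\<sigma> dv' = av' \<and> \<sigma> av' = bv' \<and> \<sigma> bv' = dv') \<or> (\<sigma> dv' = bv' \<and> \<sigma> bv' = av' \<and> \<sigma> av' = dv')"
  proof (rule three_cycle_cases)
    show "inj_on \<sigma> {dv', av', bv'}" using darts_in_D by (intro inj) auto
    have "{av', bv', dv'} = {dv', av', bv'}" by auto
    then show "orbit_of \<sigma> dv' = {dv', av', bv'}"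
      using orbit[OF darts_in_D(7)] darts_at_v' by (simp add: dart_tails)
  qed (use darts_distinct in auto)
  then have at_v': "{\<sigma> dv', \<sigma> (\<sigma> dv')} = {av', bv'}" "\<sigma> dv' \<noteq> \<sigma> (\<sigma> dv')"
    "\<sigma> (\<sigma> (\<sigma> dv')) = dv'"
    using darts_distinct by auto
  show ?thesis by (rule that[of "\<sigma> dv'" "\<sigma> (\<sigma> dv')" "\<sigma> av" "\<sigma> (\<sigma> av)"]) (use at_v at_v' in simp_all)
qed

lemma restrict_rotation_system:
  assumes rs: "rotation_system V E ends \<sigma>"
  obtains \<sigma>' where "rotation_system V' E' ends \<sigma>'" "num_faces E' \<sigma>' \<le> num_faces E \<sigma>"
proof -
  have cyc: "cyclic_on_fibres \<sigma> D (dart_tail ends)" using rs by (simp add: rotation_system_iff D_def)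
  obtain x where x: "x \<in> D'" "dart_tail ends x = w" "\<sigma> x = cw" using predecessor_of_cw[OF cyc] .
  obtain s1 s2 t2 t3 where s: "{s1, s2} = {av', bv'}" "s1 \<noteq> s2" and t: "{t2, t3} = {bv, cv}" "t2 \<noteq> t3"
    and \<sigma>_at_v: "\<sigma> av = t2" "\<sigma> t2 = t3" "\<sigma> t3 = av"
    and \<sigma>_at_v': "\<sigma> dv' = s1" "\<sigma> s1 = s2" "\<sigma> s2 = dv'"
    using rotations_at_v_v'[OF cyc] .
  define \<sigma>' where "\<sigma>' = (\<lambda>z. if z \<in> D' then (\<sigma>(x := \<sigma> cw, dv' := dv')) z else z)"
  have agree: "\<sigma> z = glue \<sigma>' x s1 s2 t2 t3 z" if z: "z \<in> D" for z
  proof -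
    have "x \<noteq> dv'" using glue_darts_distinct[OF x(1,2) s t] by simp
    then have \<sigma>'_x: "\<sigma>' x = \<sigma> cw" and \<sigma>'_dv': "\<sigma>' dv' = dv'"
      using x(1) darts_in_D' by (simp_all add: \<sigma>'_def)
    consider "z \<in> {x, cw, dv', s1, s2, av, t2, t3}" | "z \<in> D'" "z \<notin> {x, cw, dv', s1, s2, av, t2, t3}"
      using z D_eq s t by auto
    then show ?thesis
    proof cases
      case 1
      then show ?thesis
        using glue_apply[OF x(1,2) s t] \<sigma>'_x \<sigma>'_dv' x(3) \<sigma>_at_v \<sigma>_at_v' by auto
    next
      case 2
      then show ?thesis using glue_apply_other[OF x(1,2) s t] by (simp add: \<sigma>'_def)
    qed
  qed
  have "cyclic_on_fibres (glue \<sigma>' x s1 s2 t2 t3) D (dart_tail ends)"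
    using cyc cyclic_on_fibres_cong[of D \<sigma> "glue \<sigma>' x s1 s2 t2 t3"] agree by blast
  then have cyc': "cyclic_on_fibres \<sigma>' D' (dart_tail ends)"
    using cyclic_on_fibres_glue_iff[OF x(1,2) s t] by blast
  moreover have "\<forall>z. z \<notin> darts E' \<longrightarrow> \<sigma>' z = z" by (simp add: \<sigma>'_def D'_def)
  ultimately have "rotation_system V' E' ends \<sigma>'" by (simp add: rotation_system_iff D'_def)
  moreover have "orbit_of (glue \<sigma>' x s1 s2 t2 t3 \<circ> dart_rev) ` D = orbit_of (\<sigma> \<circ> dart_rev) ` D"
    using agree cyclic_on_fibres_bij[OF cyc]
    by (intro orbits_cong) (auto simp: D_def dart_rev_in_darts bij_betw_def)
  then have "num_faces E' \<sigma>' \<le> num_faces E \<sigma>"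
    using card_faces_glue_ge[OF x(1,2) s t cyc']
    by (simp add: num_faces_eq_card E_nonempty E'_nonempty D_def D'_def)
  ultimately show ?thesis by (rule that)
qed

lemma extend_rotation_system:
  assumes rs': "rotation_system V' E' ends \<sigma>'"
  obtains \<sigma> where "rotation_system V E ends \<sigma>" "num_faces E \<sigma> = num_faces E' \<sigma>'"
proof -
  have "cyclic_on_fibres \<sigma>' D' (dart_tail ends) \<and> (\<forall>z. z \<notin> D' \<longrightarrow> \<sigma>' z = z)"
    using rs' unfolding rotation_system_iff D'_def .
  then have cyc': "cyclic_on_fibres \<sigma>' D' (dart_tail ends)" and out': "\<And>z. z \<notin> D' \<Longrightarrow> \<sigma>' z = z"
    by blast+
  obtain x where x: "x \<in> D'" "dart_tail ends x = w" using ex_dart_at_w_in_D' by blast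
  have s: "{av', bv'} = {av', bv'}" "av' \<noteq> bv'" and t: "{bv, cv} = {bv, cv}" "bv \<noteq> cv"
    using darts_distinct by auto
  define \<sigma> where "\<sigma> = glue \<sigma>' x av' bv' bv cv"
  have "cyclic_on_fibres \<sigma> D (dart_tail ends)"
    using cyc' cyclic_on_fibres_glue_iff[OF x s t] by (simp add: \<sigma>_def)
  moreover have "\<forall>z. z \<notin> darts E \<longrightarrow> \<sigma> z = z"
  proof (intro allI impI)
    fix z assume "z \<notin> darts E"
    then have "z \<notin> D" "z \<notin> D'" using D'_subset by (auto simp: D_def)
    then show "\<sigma> z = z" using glue_outside[OF x s t] out' by (simp add: \<sigma>_def)
  qed
  ultimately have "rotation_system V E ends \<sigma>" by (simp add: rotation_system_iff D_def)
  moreover have "num_faces E \<sigma> = num_faces E' \<sigma>'"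
    using card_faces_glue_parallel[OF x s t cyc']
    by (simp add: \<sigma>_def num_faces_eq_card E_nonempty E'_nonempty D_def D'_def)
  ultimately show ?thesis by (rule that)
qed


lemma max_genus_delete_vertex:
  assumes "finite V" "v \<in> V"
  shows "max_genus (V - {v}) E' ends = max_genus V E ends - 1"
proof (rule max_genus_eq_minus_one)
  show "finite E" "finite E'" using finite_E by (simp_all add: E'_def)
  have abc: "{a, b, c} \<subseteq> E" "card {a, b, c} = 3" using edges_in a_neq_b edges_distinct by auto
  then have "card E' = card E - 3" "card E \<ge> 3"
    using card_mono[OF finite_E abc(1)] by (simp_all add: E'_def card_Diff_subset)
  moreover have "card (V - {v}) = card V - 1" "card V \<ge> 1"
    using assms by (auto simp: Suc_le_eq card_gt_0_iff)
  ultimately show "int (card E') - int (card (V - {v})) = int (card E) - int (card V) - 2" by simp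
next
  fix \<sigma> assume "rotation_system V E ends \<sigma>"
  then obtain \<sigma>' where "rotation_system (V - {v}) E' ends \<sigma>'" "num_faces E' \<sigma>' \<le> num_faces E \<sigma>"
    by (rule restrict_rotation_system)
  then show "\<exists>\<sigma>'. rotation_system (V - {v}) E' ends \<sigma>' \<and> num_faces E' \<sigma>' \<le> num_faces E \<sigma>" by blast
next
  fix \<sigma>' assume "rotation_system (V - {v}) E' ends \<sigma>'"
  then obtain \<sigma> where "rotation_system V E ends \<sigma>" "num_faces E \<sigma> = num_faces E' \<sigma>'"
    by (rule extend_rotation_system)
  then show "\<exists>\<sigma>. rotation_system V E ends \<sigma> \<and> num_faces E \<sigma> = num_faces E' \<sigma>'" by blast
qed

end

lemma card_incident_le_degree:
  "finite E \<Longrightarrow> card {e\<in>E. incident ends e u} \<le> degree E ends u"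
proof -
  have "{e\<in>E. incident ends e u} = {e\<in>E. fst (ends e) = u} \<union> {e\<in>E. snd (ends e) = u}"
    by (auto simp: incident_def)
  then show ?thesis by (simp add: degree_def card_Un_le)
qed

lemma degree_le_card_incident:
  assumes "finite E" shows "degree E ends u \<le> 2 * card {e\<in>E. incident ends e u}"
proof -
  have "card {e\<in>E. fst (ends e) = u} \<le> card {e\<in>E. incident ends e u}"
    "card {e\<in>E. snd (ends e) = u} \<le> card {e\<in>E. incident ends e u}"
    using assms by (auto intro!: card_mono simp: incident_def)
  then show ?thesis by (simp add: degree_def)
qed

lemma incident_edges_degree_three:
  assumes "finite E" "degree E ends u = 3" "distinct [e0, e1, e2]"
    and "\<And>e. e \<in> {e0, e1, e2} \<Longrightarrow> e \<in> E \<and> incident ends e u"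
  shows "{e\<in>E. incident ends e u} = {e0, e1, e2}"
proof (rule sym, rule card_subset_eq)
  show "finite {e\<in>E. incident ends e u}" using assms(1) by simp
  show "{e0, e1, e2} \<subseteq> {e\<in>E. incident ends e u}" using assms(4) by blast
  then have "3 \<le> card {e\<in>E. incident ends e u}"
    using assms(1,3) card_mono[of "{e\<in>E. incident ends e u}" "{e0, e1, e2}"] by simp
  then show "card {e0, e1, e2} = card {e\<in>E. incident ends e u}"
    using card_incident_le_degree[OF assms(1), of ends u] assms(2,3) by simp
qed

lemma beta_vertexI:
  assumes mg: "multigraph V E ends" and deg: "\<forall>u\<in>V. degree E ends u \<ge> 3"
    and vv': "v \<noteq> v'" and ab: "a \<noteq> b" "{e\<in>E. ends e = (v, v') \<or> ends e = (v', v)} = {a, b}"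
    and deg_v: "degree E ends v = 3" "degree E ends v' = 3"
    and c: "c \<in> E" "w \<notin> {v, v'}" "ends c = (v, w) \<or> ends c = (w, v)"
    and d: "d \<in> E" "w' \<notin> {v, v'}" "ends d = (v', w') \<or> ends d = (w', v')"
  shows "beta_vertex E ends v v' w w' a b c d"
proof -
  have finE: "finite E" and w: "w \<in> V" using mg c by (auto simp: multigraph_def)
  have ab_ends: "a \<in> E" "b \<in> E" "ends a = (v, v') \<or> ends a = (v', v)" "ends b = (v, v') \<or> ends b = (v', v)"
    using ab(2) by blast+
  have abc: "distinct [a, b, c]" and abd: "distinct [a, b, d]" using ab_ends c d vv' ab(1) by auto
  have "{e\<in>E. incident ends e v} = {a, b, c}"
    by (rule incident_edges_degree_three[OF finE deg_v(1) abc]) (use ab_ends c in \<open>auto simp: incident_def\<close>)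
  moreover have "{e\<in>E. incident ends e v'} = {a, b, d}"
    by (rule incident_edges_degree_three[OF finE deg_v(2) abd]) (use ab_ends d in \<open>auto simp: incident_def\<close>)
  moreover have "\<exists>e\<in>E. e \<noteq> c \<and> incident ends e w"
  proof (rule ccontr)
    assume "\<not> ?thesis"
    then have "{e\<in>E. incident ends e w} \<subseteq> {c}" by blast
    then have "card {e\<in>E. incident ends e w} \<le> 1" using card_mono[of "{c}"] by fastforce
    then show False using degree_le_card_incident[OF finE, of ends w] deg w by fastforce
  qed
  ultimately show ?thesis
    using finE vv' ab(1) ab_ends c d by unfold_locales auto
qed

theorem theorem2p1:
  fixes V :: "'v set" and E :: "'e set" and ends :: "'e \<Rightarrow> 'v \<times> 'v"
    and v v' :: 'v and a b :: 'e
  assumes "multigraph V E ends"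
    and "connected_graph V E ends"
    and "\<forall>u\<in>V. degree E ends u \<ge> 3"
    and "v \<in> V" and "v' \<in> V" and "v \<noteq> v'"
    and "a \<noteq> b"
    and "{e\<in>E. ends e = (v, v') \<or> ends e = (v', v)} = {a, b}"
    and "degree E ends v = 3" and "degree E ends v' = 3"
    and "\<exists>e\<in>E. \<exists>w. w \<notin> {v, v'} \<and> (ends e = (v, w) \<or> ends e = (w, v))"
    and "\<exists>e\<in>E. \<exists>w. w \<notin> {v, v'} \<and> (ends e = (v', w) \<or> ends e = (w, v'))"
    and "connected_graph (del_vertex_V V v) (del_vertex_E E ends v) ends"
  shows "max_genus (del_vertex_V V v) (del_vertex_E E ends v) ends = max_genus V E ends - 1"
proof -
  obtain c w where c: "c \<in> E" "w \<notin> {v, v'}" "ends c = (v, w) \<or> ends c = (w, v)" using assms(11) by blast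
  obtain d w' where d: "d \<in> E" "w' \<notin> {v, v'}" "ends d = (v', w') \<or> ends d = (w', v')" using assms(12) by blast
  interpret beta_vertex E ends v v' w w' a b c d
    using beta_vertexI[OF assms(1,3,6,7,8,9,10) c d] .
  have "del_vertex_E E ends v = E'" using incident_v by (auto simp: del_vertex_E_def E'_def)
  then show ?thesis
    using max_genus_delete_vertex assms(1,4) by (simp add: del_vertex_V_def multigraph_def)
qed

end
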